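(* Let $\kappa$ be a cardinal with $\kappa=\beth_\kappa$, let $\tau$ be a relational vocabulary with $|\tau|<\kappa$ and let $\beta$ be an ordinal. Then the relation between $\tau$-structures "$M$ and $N$ are such that player II has a winning strategy in $EF^{1,c,\beta}_\kappa(M,N)$" is transitive.
   Context: The game $EF^{1,c,\beta}_{\le\theta}(M,N)$ for a cardinal $\theta$: rounds $k=0,1,\dots$ with $\beta_{-1}=\beta$, $\pi_{-1}=\emptyset$; in round $k$, player I chooses an ordinal $\beta_k<\beta_{k-1}$ and a set $A_k$ of size $\le\theta$ contained in $M$ or in $N$; player II chooses $f_k:A_k\to\omega$; I chooses $n_k<\omega$; II must choose a partial isomorphism $\pi_k\supseteq\pi_{k-1}$ from $M$ to $N$ whose domain (if $A_k\subseteq M$), resp. range (if $A_k\subseteq N$), contains $f_k^{-1}(n_k)$. The play ends after the round in which $\beta_k=0$; II wins if she can always make her moves. The game $EF^{1,c,\beta}_\kappa(M,N)$: I first chooses a cardinal $\theta<\kappa$, then $EF^{1,c,\beta}_{\le\theta}(M,N)$ is played. *)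

theory Defs
  imports Main
begin

text \<open>Cardinals are represented as cardinalities of sets (card_of A, compared with
  ordLeq2 / ordLess2 / ordIso2 from the BNF cardinal library in Main).
  Ordinals are represented by elements of well-ordered types, or by well-order relations.\<close>

definition wo_lt :: "'i rel \<Rightarrow> 'i \<Rightarrow> 'i \<Rightarrow> bool" where
  "wo_lt r x y \<longleftrightarrow> (x, y) \<in> r \<and> x \<noteq> y"

text \<open>Beth assignment along a well-order r: B i is a set of cardinality beth_i,
  where i is (the ordinal of) the position of i in r.\<close>
definition beth_on :: "'i rel \<Rightarrow> ('i \<Rightarrow> 'u set) \<Rightarrow> bool" where
  "beth_on r B \<longleftrightarrow> (\<forall>i\<in>Field r.
     (if \<not> (\<exists>j. wo_lt r j i) then ordIso2 (card_of (B i)) (card_of (UNIV :: nat set))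
      else if (\<exists>j. wo_lt r j i \<and> \<not> (\<exists>k. wo_lt r j k \<and> wo_lt r k i))
      then (\<forall>j. wo_lt r j i \<and> \<not> (\<exists>k. wo_lt r j k \<and> wo_lt r k i)
                \<longrightarrow> ordIso2 (card_of (B i)) (card_of (Pow (B j))))
      else (\<forall>j. wo_lt r j i \<longrightarrow> ordLeq2 (card_of (B j)) (card_of (B i))) \<and>
           (\<forall>C :: 'u set. (\<forall>j. wo_lt r j i \<longrightarrow> ordLeq2 (card_of (B j)) (card_of C))
                \<longrightarrow> ordLeq2 (card_of (B i)) (card_of C))))"

definition wo_plus_one :: "'i rel \<Rightarrow> ('i option) rel" where
  "wo_plus_one r = map_prod Some Some ` r \<union> {(x, None) | x. x \<in> Some ` Field r \<union> {None}}"

text \<open>kappa = beth_kappa, for kappa = |K|: card_of K is a well-order of order type kappa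
  (the initial ordinal), so wo_plus_one (card_of K) has order type kappa + 1 with top None.\<close>
definition beth_fixed :: "'k set \<Rightarrow> bool" where
  "beth_fixed K \<longleftrightarrow> (\<exists>B :: 'k option \<Rightarrow> 'k set.
      beth_on (wo_plus_one (card_of K)) B \<and> ordIso2 (card_of (B None)) (card_of K))"

text \<open>Relational vocabulary: symbols Sig with arities ar. A structure is a
  (nonempty) domain together with interpretations of the relation symbols.\<close>
type_synonym ('s, 'a) struc = "'a set \<times> ('s \<Rightarrow> 'a list set)"

definition is_struc :: "'s set \<Rightarrow> ('s \<Rightarrow> nat) \<Rightarrow> ('s, 'a) struc \<Rightarrow> bool" where
  "is_struc Sig ar M \<longleftrightarrow> fst M \<noteq> {} \<and>
     (\<forall>R\<in>Sig. snd M R \<subseteq> {xs. length xs = ar R \<and> set xs \<subseteq> fst M})"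

definition partial_iso :: "'s set \<Rightarrow> ('s, 'a) struc \<Rightarrow> ('s, 'b) struc \<Rightarrow> ('a \<rightharpoonup> 'b) \<Rightarrow> bool" where
  "partial_iso Sig M N p \<longleftrightarrow> dom p \<subseteq> fst M \<and> ran p \<subseteq> fst N \<and> inj_on p (dom p) \<and>
     (\<forall>R\<in>Sig. \<forall>xs. set xs \<subseteq> dom p \<longrightarrow> (xs \<in> snd M R \<longleftrightarrow> map (the \<circ> p) xs \<in> snd N R))"

text \<open>A history of player I's moves: per round (beta_k, A_k, n_k). Sets A_k are
  tagged: A_k \<subseteq> Inl ` dom M (a subset of M) or A_k \<subseteq> Inr ` dom N (a subset of N).
  The size bound theta is represented as card_of T.\<close>
definition EF_legal :: "'o::wellorder \<Rightarrow> 'a set \<Rightarrow> 'b set \<Rightarrow> 't set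
    \<Rightarrow> ('o \<times> ('a + 'b) set \<times> nat) list \<Rightarrow> bool" where
  "EF_legal \<beta> DM DN T ms \<longleftrightarrow> (\<forall>i<length ms.
     fst (ms ! i) < (if i = 0 then \<beta> else fst (ms ! (i - 1))) \<and>
     (fst (snd (ms ! i)) \<subseteq> Inl ` DM \<or> fst (snd (ms ! i)) \<subseteq> Inr ` DN) \<and>
     ordLeq2 (card_of (fst (snd (ms ! i)))) (card_of T))"

text \<open>Player II has a winning strategy in EF^{1,c,beta}_{<= theta}(M,N), theta = |T|.
  A strategy of II: sf gives f_k from I's previous moves and (beta_k, A_k);
  sp gives pi_k from I's previous moves, (beta_k, A_k) and n_k.\<close>
definition EF_le_II_wins :: "'s set \<Rightarrow> 't set \<Rightarrow> 'o::wellorder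
    \<Rightarrow> ('s, 'a) struc \<Rightarrow> ('s, 'b) struc \<Rightarrow> bool" where
  "EF_le_II_wins Sig T \<beta> M N \<longleftrightarrow>
    (\<exists>(sf :: ('o \<times> ('a + 'b) set \<times> nat) list \<Rightarrow> 'o \<Rightarrow> ('a + 'b) set \<Rightarrow> ('a + 'b \<Rightarrow> nat))
      (sp :: ('o \<times> ('a + 'b) set \<times> nat) list \<Rightarrow> 'o \<Rightarrow> ('a + 'b) set \<Rightarrow> nat \<Rightarrow> ('a \<rightharpoonup> 'b)).
      \<forall>ms. EF_legal \<beta> (fst M) (fst N) T ms \<longrightarrow>
        (\<forall>k<length ms.
          (let (\<gamma>, A, n) = ms ! k;
               f = sf (take k ms) \<gamma> A;
               p = sp (take k ms) \<gamma> A n;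
               p0 = (if k = 0 then Map.empty
                     else (case ms ! (k - 1) of (\<gamma>', A', n') \<Rightarrow> sp (take (k - 1) ms) \<gamma>' A' n'))
           in partial_iso Sig M N p \<and> p0 \<subseteq>\<^sub>m p \<and>
              (A \<subseteq> Inl ` fst M \<longrightarrow> {a. Inl a \<in> A \<and> f (Inl a) = n} \<subseteq> dom p) \<and>
              (A \<subseteq> Inr ` fst N \<longrightarrow> {b. Inr b \<in> A \<and> f (Inr b) = n} \<subseteq> ran p))))"

text \<open>EF^{1,c,beta}_kappa(M,N), kappa = |K|: I first picks a cardinal theta < kappa
  (every such cardinal is |T| for some T \<subseteq> K); II wins iff she wins every
  EF^{1,c,beta}_{<= theta}(M,N).\<close>
definition EF_kappa_II_wins :: "'s set \<Rightarrow> 'k set \<Rightarrow> 'o::wellorder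
    \<Rightarrow> ('s, 'a) struc \<Rightarrow> ('s, 'b) struc \<Rightarrow> bool" where
  "EF_kappa_II_wins Sig K \<beta> M N \<longleftrightarrow>
    (\<forall>T. T \<subseteq> K \<longrightarrow> ordLess2 (card_of T) (card_of K) \<longrightarrow> EF_le_II_wins Sig T \<beta> M N)"

end

(* Player II composes her winning strategies for the games on (M, N) and on (N, P),
   playing both auxiliary games alongside the game on (M, P) with the same ordinals and
   answering with the composite partial isomorphism.  If I plays A \<subseteq> M, she plays A in the
   game on (M, N); each a \<in> A gets as designated image b_a its image under her answer to the
   number she gave a there, and the set of all b_a is played in the game on (N, P).  She
   numbers a by the pair of the numbers of a and of b_a (coded by prod_encode); I's number n
   is decoded into the numbers played in the two auxiliary games, and then every a numbered
   n lies in the domain of the composite.  A set A \<subseteq> P is treated symmetrically with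
   designated preimages.  The auxiliary sets are no larger than A, so the auxiliary plays are
   legal. *)

theory Submission
  imports Defs "HOL-Library.Nat_Bijection"
begin

type_synonym ('o, 'a, 'b) history = "('o \<times> ('a + 'b) set \<times> nat) list"
type_synonym ('o, 'a, 'b) colouring_strategy =
  "('o, 'a, 'b) history \<Rightarrow> 'o \<Rightarrow> ('a + 'b) set \<Rightarrow> 'a + 'b \<Rightarrow> nat"
type_synonym ('o, 'a, 'b) iso_strategy =
  "('o, 'a, 'b) history \<Rightarrow> 'o \<Rightarrow> ('a + 'b) set \<Rightarrow> nat \<Rightarrow> ('a \<rightharpoonup> 'b)"

definition ordinal_bound :: "'o \<Rightarrow> ('o \<times> 'x) list \<Rightarrow> 'o" where
  "ordinal_bound \<beta> ms = (if ms = [] then \<beta> else fst (last ms))"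

lemma ordinal_bound_snoc [simp]: "ordinal_bound \<beta> (ms @ [(\<gamma>, x)]) = \<gamma>"
  by (simp add: ordinal_bound_def)

lemma EF_legal_snoc:
  "EF_legal \<beta> DM DN T (ms @ [(\<gamma>, A, n)]) \<longleftrightarrow>
     EF_legal \<beta> DM DN T ms \<and> \<gamma> < ordinal_bound \<beta> ms \<and>
     (A \<subseteq> Inl ` DM \<or> A \<subseteq> Inr ` DN) \<and> ordLeq2 (card_of A) (card_of T)"
  unfolding EF_legal_def ordinal_bound_def
  by (auto simp: nth_append less_Suc_eq last_conv_nth)

lemma EF_legal_take: "EF_legal \<beta> DM DN T ms \<Longrightarrow> EF_legal \<beta> DM DN T (take k ms)"
  unfolding EF_legal_def by auto

definition previous_iso :: "('o, 'a, 'b) iso_strategy \<Rightarrow> ('o, 'a, 'b) history \<Rightarrow> ('a \<rightharpoonup> 'b)" where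
  "previous_iso sp ms =
    (if ms = [] then Map.empty else (case last ms of (\<gamma>, A, n) \<Rightarrow> sp (butlast ms) \<gamma> A n))"

lemma previous_iso_Nil [simp]: "previous_iso sp [] = Map.empty"
  and previous_iso_snoc [simp]: "previous_iso sp (ms @ [(\<gamma>, A, n)]) = sp ms \<gamma> A n"
  by (simp_all add: previous_iso_def)

definition legal_answer :: "'s set \<Rightarrow> ('s, 'a) struc \<Rightarrow> ('s, 'b) struc \<Rightarrow> ('a + 'b) set
    \<Rightarrow> ('a + 'b \<Rightarrow> nat) \<Rightarrow> nat \<Rightarrow> ('a \<rightharpoonup> 'b) \<Rightarrow> bool" where
  "legal_answer Sig M N A f n p \<longleftrightarrow> partial_iso Sig M N p \<and>
     (A \<subseteq> Inl ` fst M \<longrightarrow> {a. Inl a \<in> A \<and> f (Inl a) = n} \<subseteq> dom p) \<and>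
     (A \<subseteq> Inr ` fst N \<longrightarrow> {b. Inr b \<in> A \<and> f (Inr b) = n} \<subseteq> ran p)"

definition good_reply :: "'s set \<Rightarrow> ('s, 'a) struc \<Rightarrow> ('s, 'b) struc
    \<Rightarrow> ('o, 'a, 'b) colouring_strategy \<Rightarrow> ('o, 'a, 'b) iso_strategy
    \<Rightarrow> ('o, 'a, 'b) history \<Rightarrow> 'o \<Rightarrow> ('a + 'b) set \<Rightarrow> nat \<Rightarrow> bool" where
  "good_reply Sig M N sf sp ms \<gamma> A n \<longleftrightarrow>
     legal_answer Sig M N A (sf ms \<gamma> A) n (sp ms \<gamma> A n) \<and> previous_iso sp ms \<subseteq>\<^sub>m sp ms \<gamma> A n"

lemma EF_le_II_wins_iff_good_replies:
  fixes \<beta> :: "'o::wellorder" and M :: "('s, 'a) struc" and N :: "('s, 'b) struc"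
  shows "EF_le_II_wins Sig T \<beta> M N \<longleftrightarrow>
    (\<exists>sf sp. \<forall>ms. EF_legal \<beta> (fst M) (fst N) T ms \<longrightarrow>
       (\<forall>k<length ms. case ms ! k of (\<gamma>, A, n) \<Rightarrow> good_reply Sig M N sf sp (take k ms) \<gamma> A n))"
  unfolding EF_le_II_wins_def
proof (intro ex_cong1 all_cong1 imp_cong refl)
  fix sf sp and ms :: "('o, 'a, 'b) history" and k
  assume k: "k < length ms"
  obtain \<gamma> A n where mk: "ms ! k = (\<gamma>, A, n)" by (cases "ms ! k")
  show "(let (\<gamma>, A, n) = ms ! k; f = sf (take k ms) \<gamma> A; p = sp (take k ms) \<gamma> A n;
          p0 = (if k = 0 then Map.empty
                else (case ms ! (k - 1) of (\<gamma>', A', n') \<Rightarrow> sp (take (k - 1) ms) \<gamma>' A' n'))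
        in partial_iso Sig M N p \<and> p0 \<subseteq>\<^sub>m p \<and>
           (A \<subseteq> Inl ` fst M \<longrightarrow> {a. Inl a \<in> A \<and> f (Inl a) = n} \<subseteq> dom p) \<and>
           (A \<subseteq> Inr ` fst N \<longrightarrow> {b. Inr b \<in> A \<and> f (Inr b) = n} \<subseteq> ran p))
    \<longleftrightarrow> (case ms ! k of (\<gamma>, A, n) \<Rightarrow> good_reply Sig M N sf sp (take k ms) \<gamma> A n)"
    using k mk
    by (cases k) (auto simp: Let_def good_reply_def legal_answer_def previous_iso_def
        take_Suc_conv_app_nth split: prod.split)
qed

lemma EF_le_II_wins_iff:
  fixes \<beta> :: "'o::wellorder" and M :: "('s, 'a) struc" and N :: "('s, 'b) struc"
  shows "EF_le_II_wins Sig T \<beta> M N \<longleftrightarrow>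
    (\<exists>sf sp. \<forall>ms \<gamma> A n. EF_legal \<beta> (fst M) (fst N) T (ms @ [(\<gamma>, A, n)])
       \<longrightarrow> good_reply Sig M N sf sp ms \<gamma> A n)"
  unfolding EF_le_II_wins_iff_good_replies
proof (intro ex_cong1 iffI allI impI)
  fix sf sp and ms :: "('o, 'a, 'b) history" and \<gamma> A n
  assume "\<forall>ms. EF_legal \<beta> (fst M) (fst N) T ms \<longrightarrow>
    (\<forall>k<length ms. case ms ! k of (\<gamma>, A, n) \<Rightarrow> good_reply Sig M N sf sp (take k ms) \<gamma> A n)"
    and "EF_legal \<beta> (fst M) (fst N) T (ms @ [(\<gamma>, A, n)])"
  then show "good_reply Sig M N sf sp ms \<gamma> A n"
    by (auto dest!: spec[of _ "ms @ [(\<gamma>, A, n)]"] spec[of _ "length ms"])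
next
  fix sf sp and ms :: "('o, 'a, 'b) history" and k
  assume replies: "\<forall>ms \<gamma> A n. EF_legal \<beta> (fst M) (fst N) T (ms @ [(\<gamma>, A, n)])
       \<longrightarrow> good_reply Sig M N sf sp ms \<gamma> A n"
    and legal: "EF_legal \<beta> (fst M) (fst N) T ms" and k: "k < length ms"
  obtain \<gamma> A n where mk: "ms ! k = (\<gamma>, A, n)" by (cases "ms ! k")
  have "take (Suc k) ms = take k ms @ [(\<gamma>, A, n)]"
    using k mk by (simp add: take_Suc_conv_app_nth)
  with EF_legal_take[OF legal, of "Suc k"] replies
  show "case ms ! k of (\<gamma>, A, n) \<Rightarrow> good_reply Sig M N sf sp (take k ms) \<gamma> A n"
    by (simp add: mk)
qed

lemma map_le_map_comp: "p0 \<subseteq>\<^sub>m p \<Longrightarrow> q0 \<subseteq>\<^sub>m q \<Longrightarrow> q0 \<circ>\<^sub>m p0 \<subseteq>\<^sub>m q \<circ>\<^sub>m p"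
  by (auto simp: map_le_def map_comp_Some_iff dom_def)

lemma partial_iso_map_comp:
  assumes p: "partial_iso Sig M N p" and q: "partial_iso Sig N P q"
  shows "partial_iso Sig M P (q \<circ>\<^sub>m p)"
proof -
  have dom_comp: "dom (q \<circ>\<^sub>m p) = {x \<in> dom p. the (p x) \<in> dom q}"
    by (auto simp: map_comp_def split: option.splits)
  have the_comp: "the ((q \<circ>\<^sub>m p) x) = the (q (the (p x)))" if "x \<in> dom p" for x
    using that by auto
  have "inj_on (q \<circ>\<^sub>m p) (dom (q \<circ>\<^sub>m p))"
  proof (rule inj_onI)
    fix x y assume x: "x \<in> dom (q \<circ>\<^sub>m p)" and y: "y \<in> dom (q \<circ>\<^sub>m p)"
      and "(q \<circ>\<^sub>m p) x = (q \<circ>\<^sub>m p) y"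
    then have "q (the (p x)) = q (the (p y))" by (auto simp: dom_comp)
    with x y q have "the (p x) = the (p y)"
      unfolding partial_iso_def inj_on_def dom_comp by blast
    with x y p show "x = y"
      unfolding partial_iso_def inj_on_def dom_comp by (metis domD option.sel mem_Collect_eq)
  qed
  moreover have "xs \<in> snd M R \<longleftrightarrow> map (the \<circ> (q \<circ>\<^sub>m p)) xs \<in> snd P R"
    if R: "R \<in> Sig" and xs: "set xs \<subseteq> dom (q \<circ>\<^sub>m p)" for R xs
  proof -
    have "set xs \<subseteq> dom p" and "set (map (the \<circ> p) xs) \<subseteq> dom q"
      using xs by (auto simp: dom_comp)
    then have "xs \<in> snd M R \<longleftrightarrow> map (the \<circ> p) xs \<in> snd N R"
      and "map (the \<circ> p) xs \<in> snd N R \<longleftrightarrow> map (the \<circ> q) (map (the \<circ> p) xs) \<in> snd P R"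
      using p q R unfolding partial_iso_def by blast+
    moreover have "map (the \<circ> q) (map (the \<circ> p) xs) = map (the \<circ> (q \<circ>\<^sub>m p)) xs"
      using xs by (auto simp: dom_comp the_comp)
    ultimately show ?thesis by (simp only:)
  qed
  moreover have "dom (q \<circ>\<^sub>m p) \<subseteq> fst M" and "ran (q \<circ>\<^sub>m p) \<subseteq> fst P"
    using p q by (auto simp: partial_iso_def dom_comp ran_def map_comp_Some_iff)
  ultimately show ?thesis unfolding partial_iso_def by blast
qed

lemma card_of_image_vimage_ordLeq:
  assumes "inj f" and "ordLeq2 (card_of A) (card_of T)"
  shows "ordLeq2 (card_of (g ` f -` A)) (card_of T)"
proof -
  have "ordLeq2 (card_of (f -` A)) (card_of A)"
    using assms(1) by (intro card_of_ordLeqI[of f]) (auto simp: inj_on_def)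
  then show ?thesis
    using card_of_image[of g "f -` A"] assms(2) by (blast intro: ordLeq_transitive)
qed

definition relabel_Inl :: "('a + 'c) set \<Rightarrow> ('a + 'b) set" where
  "relabel_Inl A = Inl ` Inl -` A"

definition relabel_Inr :: "('a + 'c) set \<Rightarrow> ('b + 'c) set" where
  "relabel_Inr A = Inr ` Inr -` A"

locale strategy_composition =
  fixes sf1 :: "('o::wellorder, 'a, 'b) colouring_strategy" and sp1 :: "('o, 'a, 'b) iso_strategy"
    and sf2 :: "('o, 'b, 'c) colouring_strategy" and sp2 :: "('o, 'b, 'c) iso_strategy"
begin

definition forth_point :: "('o, 'a, 'b) history \<Rightarrow> 'o \<Rightarrow> ('a + 'c) set \<Rightarrow> 'a \<Rightarrow> 'b" where
  "forth_point mn \<gamma> A a = the (sp1 mn \<gamma> (relabel_Inl A) (sf1 mn \<gamma> (relabel_Inl A) (Inl a)) a)"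

definition forth_set :: "('o, 'a, 'b) history \<Rightarrow> 'o \<Rightarrow> ('a + 'c) set \<Rightarrow> ('b + 'c) set" where
  "forth_set mn \<gamma> A = (\<lambda>a. Inl (forth_point mn \<gamma> A a)) ` Inl -` A"

definition back_point :: "('o, 'b, 'c) history \<Rightarrow> 'o \<Rightarrow> ('a + 'c) set \<Rightarrow> 'c \<Rightarrow> 'b" where
  "back_point np \<gamma> A c =
    (SOME b. sp2 np \<gamma> (relabel_Inr A) (sf2 np \<gamma> (relabel_Inr A) (Inr c)) b = Some c)"

definition back_set :: "('o, 'b, 'c) history \<Rightarrow> 'o \<Rightarrow> ('a + 'c) set \<Rightarrow> ('a + 'b) set" where
  "back_set np \<gamma> A = (\<lambda>c. Inr (back_point np \<gamma> A c)) ` Inr -` A"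

definition split_move :: "('o, 'a, 'b) history \<Rightarrow> ('o, 'b, 'c) history \<Rightarrow> 'o \<Rightarrow> ('a + 'c) set
    \<Rightarrow> nat \<Rightarrow> ('o \<times> ('a + 'b) set \<times> nat) \<times> ('o \<times> ('b + 'c) set \<times> nat)" where
  "split_move mn np \<gamma> A n =
    (if A \<subseteq> range Inl
     then ((\<gamma>, relabel_Inl A, fst (prod_decode n)), (\<gamma>, forth_set mn \<gamma> A, snd (prod_decode n)))
     else ((\<gamma>, back_set np \<gamma> A, snd (prod_decode n)), (\<gamma>, relabel_Inr A, fst (prod_decode n))))"

(* A legal set lies entirely in M or entirely in P, so only one summand is ever used. *)
definition comp_colouring :: "('o, 'a, 'b) history \<Rightarrow> ('o, 'b, 'c) history \<Rightarrow> 'o \<Rightarrow> ('a + 'c) set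
    \<Rightarrow> 'a + 'c \<Rightarrow> nat" where
  "comp_colouring mn np \<gamma> A = case_sum
     (\<lambda>a. prod_encode (sf1 mn \<gamma> (relabel_Inl A) (Inl a),
                       sf2 np \<gamma> (forth_set mn \<gamma> A) (Inl (forth_point mn \<gamma> A a))))
     (\<lambda>c. prod_encode (sf2 np \<gamma> (relabel_Inr A) (Inr c),
                       sf1 mn \<gamma> (back_set np \<gamma> A) (Inr (back_point np \<gamma> A c))))"

definition comp_iso :: "('o, 'a, 'b) history \<Rightarrow> ('o, 'b, 'c) history \<Rightarrow> 'o \<Rightarrow> ('a + 'c) set
    \<Rightarrow> nat \<Rightarrow> ('a \<rightharpoonup> 'c)" where
  "comp_iso mn np \<gamma> A n =
    (case split_move mn np \<gamma> A n of ((\<gamma>1, A1, n1), (\<gamma>2, A2, n2)) \<Rightarrow> sp2 np \<gamma>2 A2 n2 \<circ>\<^sub>m sp1 mn \<gamma>1 A1 n1)"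

definition aux_histories :: "('o, 'a, 'c) history \<Rightarrow> ('o, 'a, 'b) history \<times> ('o, 'b, 'c) history" where
  "aux_histories ms = foldl (\<lambda>(mn, np) (\<gamma>, A, n).
     (mn @ [fst (split_move mn np \<gamma> A n)], np @ [snd (split_move mn np \<gamma> A n)])) ([], []) ms"

lemma aux_histories_Nil [simp]: "aux_histories [] = ([], [])"
  by (simp add: aux_histories_def)

lemma aux_histories_snoc [simp]:
  "aux_histories (ms @ [(\<gamma>, A, n)]) =
    (case aux_histories ms of (mn, np) \<Rightarrow>
       (mn @ [fst (split_move mn np \<gamma> A n)], np @ [snd (split_move mn np \<gamma> A n)]))"
  by (simp add: aux_histories_def split: prod.split)

lemma ordinal_bound_aux_histories:
  "ordinal_bound \<beta> (fst (aux_histories ms)) = ordinal_bound \<beta> ms \<and>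
   ordinal_bound \<beta> (snd (aux_histories ms)) = ordinal_bound \<beta> ms"
proof (cases ms rule: rev_exhaust)
  case (snoc ms' m)
  obtain \<gamma> A n where "m = (\<gamma>, A, n)" by (cases m)
  with snoc show ?thesis
    by (cases "aux_histories ms'") (simp add: split_move_def)
qed (simp add: ordinal_bound_def)

definition comp_colouring_strategy :: "('o, 'a, 'c) colouring_strategy" where
  "comp_colouring_strategy ms = comp_colouring (fst (aux_histories ms)) (snd (aux_histories ms))"

definition comp_iso_strategy :: "('o, 'a, 'c) iso_strategy" where
  "comp_iso_strategy ms = comp_iso (fst (aux_histories ms)) (snd (aux_histories ms))"

lemma previous_iso_comp_iso_strategy:
  "previous_iso comp_iso_strategy ms =
    previous_iso sp2 (snd (aux_histories ms)) \<circ>\<^sub>m previous_iso sp1 (fst (aux_histories ms))"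
proof (cases ms rule: rev_exhaust)
  case (snoc ms' m)
  obtain \<gamma> A n where "m = (\<gamma>, A, n)" by (cases m)
  with snoc show ?thesis
    by (cases "aux_histories ms'",
        cases "split_move (fst (aux_histories ms')) (snd (aux_histories ms')) \<gamma> A n")
      (auto simp: comp_iso_strategy_def comp_iso_def)
qed simp

end

locale winning_strategy_pair = strategy_composition sf1 sp1 sf2 sp2
  for sf1 :: "('o::wellorder, 'a, 'b) colouring_strategy" and sp1 :: "('o, 'a, 'b) iso_strategy"
    and sf2 :: "('o, 'b, 'c) colouring_strategy" and sp2 :: "('o, 'b, 'c) iso_strategy" +
  fixes Sig :: "'s set" and M :: "('s, 'a) struc" and N :: "('s, 'b) struc" and P :: "('s, 'c) struc"
    and \<beta> :: 'o and T :: "'t set"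
  assumes wins_MN: "\<And>ms \<gamma> A n. EF_legal \<beta> (fst M) (fst N) T (ms @ [(\<gamma>, A, n)]) \<Longrightarrow>
      good_reply Sig M N sf1 sp1 ms \<gamma> A n"
    and wins_NP: "\<And>ms \<gamma> A n. EF_legal \<beta> (fst N) (fst P) T (ms @ [(\<gamma>, A, n)]) \<Longrightarrow>
      good_reply Sig N P sf2 sp2 ms \<gamma> A n"
begin

context
  fixes mn :: "('o, 'a, 'b) history" and np :: "('o, 'b, 'c) history"
    and \<gamma> :: 'o and A :: "('a + 'c) set"
  assumes legal_mn: "EF_legal \<beta> (fst M) (fst N) T mn"
    and legal_np: "EF_legal \<beta> (fst N) (fst P) T np"
    and \<gamma>_mn: "\<gamma> < ordinal_bound \<beta> mn" and \<gamma>_np: "\<gamma> < ordinal_bound \<beta> np"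
    and A_side: "A \<subseteq> Inl ` fst M \<or> A \<subseteq> Inr ` fst P"
    and A_card: "ordLeq2 (card_of A) (card_of T)"
begin

lemma relabel_Inl_legal:
  assumes "A \<subseteq> range Inl"
  shows "EF_legal \<beta> (fst M) (fst N) T (mn @ [(\<gamma>, relabel_Inl A, m)])"
proof -
  have "relabel_Inl A \<subseteq> Inl ` fst M"
    using A_side assms by (auto simp: relabel_Inl_def)
  then show ?thesis
    using legal_mn \<gamma>_mn card_of_image_vimage_ordLeq[OF inj_Inl A_card]
    by (auto simp: EF_legal_snoc relabel_Inl_def)
qed

lemma relabel_Inr_legal:
  assumes "\<not> A \<subseteq> range Inl"
  shows "EF_legal \<beta> (fst N) (fst P) T (np @ [(\<gamma>, relabel_Inr A, m)])"
proof -
  have "relabel_Inr A \<subseteq> Inr ` fst P"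
    using A_side assms by (auto simp: relabel_Inr_def)
  then show ?thesis
    using legal_np \<gamma>_np card_of_image_vimage_ordLeq[OF inj_Inr A_card]
    by (auto simp: EF_legal_snoc relabel_Inr_def)
qed

lemma forth_point_maps:
  assumes "A \<subseteq> range Inl" and "Inl a \<in> A"
  shows "sp1 mn \<gamma> (relabel_Inl A) (sf1 mn \<gamma> (relabel_Inl A) (Inl a)) a = Some (forth_point mn \<gamma> A a)"
    and "forth_point mn \<gamma> A a \<in> fst N"
proof -
  let ?A1 = "relabel_Inl A :: ('a + 'b) set"
  let ?p = "sp1 mn \<gamma> ?A1 (sf1 mn \<gamma> ?A1 (Inl a))"
  have "legal_answer Sig M N ?A1 (sf1 mn \<gamma> ?A1) (sf1 mn \<gamma> ?A1 (Inl a)) ?p"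
    using wins_MN[OF relabel_Inl_legal[OF assms(1)]] by (simp add: good_reply_def)
  moreover have "?A1 \<subseteq> Inl ` fst M" and "Inl a \<in> ?A1"
    using A_side assms by (auto simp: relabel_Inl_def)
  ultimately have "a \<in> dom ?p" and "ran ?p \<subseteq> fst N"
    by (auto simp: legal_answer_def partial_iso_def)
  then show "?p a = Some (forth_point mn \<gamma> A a)" and "forth_point mn \<gamma> A a \<in> fst N"
    by (auto simp: forth_point_def ran_def)
qed

lemma back_point_maps:
  assumes "\<not> A \<subseteq> range Inl" and "Inr c \<in> A"
  shows "sp2 np \<gamma> (relabel_Inr A) (sf2 np \<gamma> (relabel_Inr A) (Inr c)) (back_point np \<gamma> A c) = Some c"
    and "back_point np \<gamma> A c \<in> fst N"
proof -
  let ?A2 = "relabel_Inr A :: ('b + 'c) set"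
  let ?p = "sp2 np \<gamma> ?A2 (sf2 np \<gamma> ?A2 (Inr c))"
  have "legal_answer Sig N P ?A2 (sf2 np \<gamma> ?A2) (sf2 np \<gamma> ?A2 (Inr c)) ?p"
    using wins_NP[OF relabel_Inr_legal[OF assms(1)]] by (simp add: good_reply_def)
  moreover have "?A2 \<subseteq> Inr ` fst P" and "Inr c \<in> ?A2"
    using A_side assms by (auto simp: relabel_Inr_def)
  ultimately have "c \<in> ran ?p" and "dom ?p \<subseteq> fst N"
    by (auto simp: legal_answer_def partial_iso_def)
  then show "?p (back_point np \<gamma> A c) = Some c"
    unfolding back_point_def ran_def by (auto intro: someI)
  with \<open>dom ?p \<subseteq> fst N\<close> show "back_point np \<gamma> A c \<in> fst N" by auto
qed

lemma forth_set_legal: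
  assumes "A \<subseteq> range Inl"
  shows "EF_legal \<beta> (fst N) (fst P) T (np @ [(\<gamma>, forth_set mn \<gamma> A, m)])"
  using forth_point_maps(2)[OF assms] legal_np \<gamma>_np card_of_image_vimage_ordLeq[OF inj_Inl A_card]
  by (auto simp: EF_legal_snoc forth_set_def)

lemma back_set_legal:
  assumes "\<not> A \<subseteq> range Inl"
  shows "EF_legal \<beta> (fst M) (fst N) T (mn @ [(\<gamma>, back_set np \<gamma> A, m)])"
  using back_point_maps(2)[OF assms] legal_mn \<gamma>_mn card_of_image_vimage_ordLeq[OF inj_Inr A_card]
  by (auto simp: EF_legal_snoc back_set_def)

lemma split_move_legal:
  "EF_legal \<beta> (fst M) (fst N) T (mn @ [fst (split_move mn np \<gamma> A n)]) \<and>
   EF_legal \<beta> (fst N) (fst P) T (np @ [snd (split_move mn np \<gamma> A n)])"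
  by (cases "A \<subseteq> range Inl")
    (simp_all add: split_move_def relabel_Inl_legal forth_set_legal relabel_Inr_legal back_set_legal)

lemma comp_iso_legal_answer_forth:
  assumes fwd: "A \<subseteq> range Inl"
  shows "legal_answer Sig M P A (comp_colouring mn np \<gamma> A) n (comp_iso mn np \<gamma> A n)"
proof -
  define n1 n2 where "n1 = fst (prod_decode n)" and "n2 = snd (prod_decode n)"
  let ?A1 = "relabel_Inl A :: ('a + 'b) set" and ?B = "forth_set mn \<gamma> A"
  have ans1: "legal_answer Sig M N ?A1 (sf1 mn \<gamma> ?A1) n1 (sp1 mn \<gamma> ?A1 n1)"
    using wins_MN[OF relabel_Inl_legal[OF fwd]] by (simp add: good_reply_def)
  have ans2: "legal_answer Sig N P ?B (sf2 np \<gamma> ?B) n2 (sp2 np \<gamma> ?B n2)"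
    using wins_NP[OF forth_set_legal[OF fwd]] by (simp add: good_reply_def)
  have comp: "comp_iso mn np \<gamma> A n = sp2 np \<gamma> ?B n2 \<circ>\<^sub>m sp1 mn \<gamma> ?A1 n1"
    using fwd by (simp add: comp_iso_def split_move_def n1_def n2_def)
  have "a \<in> dom (comp_iso mn np \<gamma> A n)"
    if a: "Inl a \<in> A" and col: "comp_colouring mn np \<gamma> A (Inl a) = n" for a
  proof -
    let ?b = "forth_point mn \<gamma> A a"
    have "(n1, n2) = (sf1 mn \<gamma> ?A1 (Inl a), sf2 np \<gamma> ?B (Inl ?b))"
      using col by (auto simp: comp_colouring_def n1_def n2_def)
    moreover have "?B \<subseteq> Inl ` fst N" and "Inl ?b \<in> ?B"
      using a forth_point_maps(2)[OF fwd] by (auto simp: forth_set_def)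
    ultimately have "sp1 mn \<gamma> ?A1 n1 a = Some ?b" and "?b \<in> dom (sp2 np \<gamma> ?B n2)"
      using forth_point_maps(1)[OF fwd a] ans2 by (auto simp: legal_answer_def)
    then show ?thesis by (auto simp: comp)
  qed
  moreover have "Inr c \<notin> A" for c using fwd by auto
  moreover have "partial_iso Sig M P (comp_iso mn np \<gamma> A n)"
    using ans1 ans2 partial_iso_map_comp unfolding comp legal_answer_def by blast
  ultimately show ?thesis by (auto simp: legal_answer_def)
qed

lemma comp_iso_legal_answer_back:
  assumes bwd: "\<not> A \<subseteq> range Inl"
  shows "legal_answer Sig M P A (comp_colouring mn np \<gamma> A) n (comp_iso mn np \<gamma> A n)"
proof -
  define n1 n2 where "n1 = fst (prod_decode n)" and "n2 = snd (prod_decode n)"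
  let ?A2 = "relabel_Inr A :: ('b + 'c) set" and ?B = "back_set np \<gamma> A"
  have ans1: "legal_answer Sig M N ?B (sf1 mn \<gamma> ?B) n2 (sp1 mn \<gamma> ?B n2)"
    using wins_MN[OF back_set_legal[OF bwd]] by (simp add: good_reply_def)
  have ans2: "legal_answer Sig N P ?A2 (sf2 np \<gamma> ?A2) n1 (sp2 np \<gamma> ?A2 n1)"
    using wins_NP[OF relabel_Inr_legal[OF bwd]] by (simp add: good_reply_def)
  have comp: "comp_iso mn np \<gamma> A n = sp2 np \<gamma> ?A2 n1 \<circ>\<^sub>m sp1 mn \<gamma> ?B n2"
    using bwd by (simp add: comp_iso_def split_move_def n1_def n2_def)
  have "c \<in> ran (comp_iso mn np \<gamma> A n)"
    if c: "Inr c \<in> A" and col: "comp_colouring mn np \<gamma> A (Inr c) = n" for c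
  proof -
    let ?b = "back_point np \<gamma> A c"
    have "(n1, n2) = (sf2 np \<gamma> ?A2 (Inr c), sf1 mn \<gamma> ?B (Inr ?b))"
      using col by (auto simp: comp_colouring_def n1_def n2_def)
    moreover have "?B \<subseteq> Inr ` fst N" and "Inr ?b \<in> ?B"
      using c back_point_maps(2)[OF bwd] by (auto simp: back_set_def)
    ultimately have "sp2 np \<gamma> ?A2 n1 ?b = Some c" and "?b \<in> ran (sp1 mn \<gamma> ?B n2)"
      using back_point_maps(1)[OF bwd c] ans1 by (auto simp: legal_answer_def)
    then show ?thesis by (auto simp: comp ran_def map_comp_Some_iff)
  qed
  moreover have "\<not> A \<subseteq> Inl ` fst M" using bwd by auto
  moreover have "partial_iso Sig M P (comp_iso mn np \<gamma> A n)"
    using ans1 ans2 partial_iso_map_comp unfolding comp legal_answer_def by blast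
  ultimately show ?thesis by (auto simp: legal_answer_def)
qed

lemma comp_iso_legal_answer:
  "legal_answer Sig M P A (comp_colouring mn np \<gamma> A) n (comp_iso mn np \<gamma> A n)"
  using comp_iso_legal_answer_forth comp_iso_legal_answer_back by blast

end

lemma aux_histories_legal:
  "EF_legal \<beta> (fst M) (fst P) T ms \<Longrightarrow>
    EF_legal \<beta> (fst M) (fst N) T (fst (aux_histories ms)) \<and>
    EF_legal \<beta> (fst N) (fst P) T (snd (aux_histories ms))"
proof (induction ms rule: rev_induct)
  case Nil
  then show ?case by (simp add: EF_legal_def)
next
  case (snoc m ms)
  obtain \<gamma> A n where m: "m = (\<gamma>, A, n)" by (cases m)
  obtain mn np where hist: "aux_histories ms = (mn, np)" by (cases "aux_histories ms")
  from snoc.prems have "EF_legal \<beta> (fst M) (fst P) T ms" and "\<gamma> < ordinal_bound \<beta> ms"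
    and "A \<subseteq> Inl ` fst M \<or> A \<subseteq> Inr ` fst P" and "ordLeq2 (card_of A) (card_of T)"
    by (simp_all add: m EF_legal_snoc)
  with snoc.IH ordinal_bound_aux_histories[of \<beta> ms] show ?case
    by (simp add: m hist split_move_legal)
qed

lemma comp_good_reply:
  assumes "EF_legal \<beta> (fst M) (fst P) T (ms @ [(\<gamma>, A, n)])"
  shows "good_reply Sig M P comp_colouring_strategy comp_iso_strategy ms \<gamma> A n"
proof -
  obtain mn np where hist: "aux_histories ms = (mn, np)" by (cases "aux_histories ms")
  obtain \<gamma>1 A1 n1 \<gamma>2 A2 n2 where split: "split_move mn np \<gamma> A n = ((\<gamma>1, A1, n1), (\<gamma>2, A2, n2))"
    by (cases "split_move mn np \<gamma> A n") auto
  from assms have legal: "EF_legal \<beta> (fst M) (fst P) T ms" and \<gamma>: "\<gamma> < ordinal_bound \<beta> ms"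
    and side: "A \<subseteq> Inl ` fst M \<or> A \<subseteq> Inr ` fst P" and card: "ordLeq2 (card_of A) (card_of T)"
    by (simp_all add: EF_legal_snoc)
  have mn: "EF_legal \<beta> (fst M) (fst N) T mn" and np: "EF_legal \<beta> (fst N) (fst P) T np"
    using aux_histories_legal[OF legal] by (simp_all add: hist)
  have \<gamma>_mn: "\<gamma> < ordinal_bound \<beta> mn" and \<gamma>_np: "\<gamma> < ordinal_bound \<beta> np"
    using \<gamma> ordinal_bound_aux_histories[of \<beta> ms] by (simp_all add: hist)
  note round = mn np \<gamma>_mn \<gamma>_np side card
  have "previous_iso sp1 mn \<subseteq>\<^sub>m sp1 mn \<gamma>1 A1 n1" and "previous_iso sp2 np \<subseteq>\<^sub>m sp2 np \<gamma>2 A2 n2"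
    using split_move_legal[OF round, of n] wins_MN wins_NP by (simp_all add: split good_reply_def)
  then have "previous_iso comp_iso_strategy ms \<subseteq>\<^sub>m comp_iso_strategy ms \<gamma> A n"
    by (simp add: previous_iso_comp_iso_strategy hist comp_iso_strategy_def comp_iso_def split
        map_le_map_comp)
  moreover have
    "legal_answer Sig M P A (comp_colouring_strategy ms \<gamma> A) n (comp_iso_strategy ms \<gamma> A n)"
    using comp_iso_legal_answer[OF round]
    by (simp add: comp_colouring_strategy_def comp_iso_strategy_def hist)
  ultimately show ?thesis by (simp add: good_reply_def)
qed

end

lemma EF_le_II_wins_trans:
  fixes \<beta> :: "'o::wellorder"
    and M :: "('s, 'a) struc" and N :: "('s, 'b) struc" and P :: "('s, 'c) struc"
  assumes "EF_le_II_wins Sig T \<beta> M N" and "EF_le_II_wins Sig T \<beta> N P"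
  shows "EF_le_II_wins Sig T \<beta> M P"
proof -
  obtain sf1 sp1 where wins_MN: "\<And>ms \<gamma> A n. EF_legal \<beta> (fst M) (fst N) T (ms @ [(\<gamma>, A, n)]) \<Longrightarrow>
      good_reply Sig M N sf1 sp1 ms \<gamma> A n"
    using assms(1) unfolding EF_le_II_wins_iff by blast
  obtain sf2 sp2 where wins_NP: "\<And>ms \<gamma> A n. EF_legal \<beta> (fst N) (fst P) T (ms @ [(\<gamma>, A, n)]) \<Longrightarrow>
      good_reply Sig N P sf2 sp2 ms \<gamma> A n"
    using assms(2) unfolding EF_le_II_wins_iff by blast
  interpret winning_strategy_pair sf1 sp1 sf2 sp2 Sig M N P \<beta> T
    by unfold_locales (fact wins_MN, fact wins_NP)
  show ?thesis
    unfolding EF_le_II_wins_iff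
    by (intro exI[of _ comp_colouring_strategy] exI[of _ comp_iso_strategy] allI impI comp_good_reply)
qed

theorem mainTheorem3:
  fixes K :: "'k set" and Sig :: "'s set" and ar :: "'s \<Rightarrow> nat" and \<beta> :: "'o::wellorder"
    and M :: "('s, 'a) struc" and N :: "('s, 'b) struc" and P :: "('s, 'c) struc"
  assumes "beth_fixed K"
    and "ordLess2 (card_of Sig) (card_of K)"
    and "is_struc Sig ar M" and "is_struc Sig ar N" and "is_struc Sig ar P"
    and "EF_kappa_II_wins Sig K \<beta> M N"
    and "EF_kappa_II_wins Sig K \<beta> N P"
  shows "EF_kappa_II_wins Sig K \<beta> M P"
  using assms(6,7) unfolding EF_kappa_II_wins_def by (blast intro: EF_le_II_wins_trans)

end
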